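(* Let $K>2$, let $n_1<n_2$ be positive integers, and let $n_3,\dots,n_K$ be positive integers. Let $\tau$ be the time of the first emptying event and $p$ the type emptied at time $\tau$. Then for every $t$ with $\Pr[\tau=t]>0$, \[ \Pr[p=1\mid \tau=t]\ \ge\ \Pr[p=2\mid \tau=t]. \]
   Context: Initial stocks $\vec n^{(0)}=(n_1,\dots,n_K)$ of $K$ goodie types evolve as follows: at each step $t=1,2,\dots$, as long as at least two coordinates of $\vec n^{(t-1)}$ are nonzero, an index $i$ is chosen uniformly at random (independently of the past) among the indices with $n_i^{(t-1)}>0$, and $\vec n^{(t)}=\vec n^{(t-1)}-\vec e_i$ ($\vec e_i$ the $i$-th standard unit vector). The time of the first emptying event is $\tau=\min\{t : \exists i \text{ with } n_i^{(t)}=0 \text{ and } n_i^{(0)}>0\}$; exactly one type is emptied at that step, and $p$ denotes that type. *)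

theory Defs
  imports "HOL-Probability.Probability"
begin

text \<open>Goodie types are indexed by 1..K; a state is a stock vector v :: nat => nat
 (values outside 1..K are irrelevant).\<close>

definition nonzero_types :: "nat \<Rightarrow> (nat \<Rightarrow> nat) \<Rightarrow> nat set" where
  "nonzero_types K v = {i \<in> {1..K}. 0 < v i}"

text \<open>One step of the process: if at least two coordinates are nonzero, pick a nonzero
 index uniformly at random and decrement it; otherwise the process has stopped
 (the state is kept constant, which does not affect the first emptying time).\<close>
definition step :: "nat \<Rightarrow> (nat \<Rightarrow> nat) \<Rightarrow> (nat \<Rightarrow> nat) pmf" where
  "step K v = (if 2 \<le> card (nonzero_types K v)
     then map_pmf (\<lambda>i. v(i := v i - 1)) (pmf_of_set (nonzero_types K v))
     else return_pmf v)"

primrec traj :: "nat \<Rightarrow> (nat \<Rightarrow> nat) \<Rightarrow> nat \<Rightarrow> (nat \<Rightarrow> nat) list pmf" where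
  "traj K n0 0 = return_pmf [n0]"
| "traj K n0 (Suc t) = bind_pmf (traj K n0 t)
     (\<lambda>xs. map_pmf (\<lambda>v. xs @ [v]) (step K (last xs)))"

definition emptied :: "nat \<Rightarrow> (nat \<Rightarrow> nat) \<Rightarrow> (nat \<Rightarrow> nat) list \<Rightarrow> nat \<Rightarrow> nat set" where
  "emptied K n0 xs s = {i \<in> {1..K}. 0 < n0 i \<and> (xs ! s) i = 0}"

definition tau_eq :: "nat \<Rightarrow> (nat \<Rightarrow> nat) \<Rightarrow> (nat \<Rightarrow> nat) list \<Rightarrow> nat \<Rightarrow> bool" where
  "tau_eq K n0 xs t \<longleftrightarrow> emptied K n0 xs t \<noteq> {} \<and> (\<forall>s<t. emptied K n0 xs s = {})"

definition prob_tau :: "nat \<Rightarrow> (nat \<Rightarrow> nat) \<Rightarrow> nat \<Rightarrow> real" where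
  "prob_tau K n0 t = measure_pmf.prob (traj K n0 t) {xs. tau_eq K n0 xs t}"

definition prob_tau_p :: "nat \<Rightarrow> (nat \<Rightarrow> nat) \<Rightarrow> nat \<Rightarrow> nat \<Rightarrow> real" where
  "prob_tau_p K n0 t j = measure_pmf.prob (traj K n0 t)
     {xs. tau_eq K n0 xs t \<and> j \<in> emptied K n0 xs t}"

definition cond_p :: "nat \<Rightarrow> (nat \<Rightarrow> nat) \<Rightarrow> nat \<Rightarrow> nat \<Rightarrow> real" where
  "cond_p K n0 t j = prob_tau_p K n0 t j / prob_tau K n0 t"

end

theory Submission
  imports Defs
begin

text \<open>Starting from a stock vector with all K types present, the first step decrements a
  uniformly chosen type, so the probability that \<open>\<tau> = t\<close> with type \<open>j\<close> the one emptied obeys a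
  recursion over the stock vector (\<open>emptying_prob\<close>). This recursion is invariant under
  permutations of the types. By induction on \<open>t\<close>, a type with smaller stock is then at least as
  likely to be the first one emptied: after the first step the inequality is inherited from the
  induction hypothesis, except when both types have equal stock, where it becomes an equality by
  the symmetry under the transposition of the two types.\<close>

fun emptying_prob :: "nat \<Rightarrow> (nat \<Rightarrow> nat) \<Rightarrow> nat \<Rightarrow> nat \<Rightarrow> real" where
  "emptying_prob K v 0 j = 0"
| "emptying_prob K v (Suc t) j =
     (\<Sum>i\<in>{1..K}. if v i = 1 then of_bool (t = 0 \<and> i = j)
                  else emptying_prob K (v(i := v i - 1)) t j) / real K"

lemma emptying_prob_permute:
  assumes "\<sigma> permutes {1..K}"
  shows "emptying_prob K (v \<circ> \<sigma>) t j = emptying_prob K v t (\<sigma> j)"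
proof (induction t arbitrary: v j)
  case 0
  show ?case by simp
next
  case (Suc t)
  have inj: "inj \<sigma>"
    using assms by (rule permutes_inj)
  let ?h = "\<lambda>k. if v k = 1 then of_bool (t = 0 \<and> k = \<sigma> j)
                else emptying_prob K (v(k := v k - 1)) t (\<sigma> j)"
  have upd: "(v \<circ> \<sigma>)(i := (v \<circ> \<sigma>) i - 1) = v(\<sigma> i := v (\<sigma> i) - 1) \<circ> \<sigma>" for i
    using inj by (auto simp: fun_eq_iff inj_eq)
  have "(if (v \<circ> \<sigma>) i = 1 then of_bool (t = 0 \<and> i = j)
         else emptying_prob K ((v \<circ> \<sigma>)(i := (v \<circ> \<sigma>) i - 1)) t j) = ?h (\<sigma> i)" for i
    unfolding upd Suc.IH by (simp add: inj_eq[OF inj])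
  then have "emptying_prob K (v \<circ> \<sigma>) (Suc t) j = sum (?h \<circ> \<sigma>) {1..K} / real K"
    by simp
  also have "\<dots> = emptying_prob K v (Suc t) (\<sigma> j)"
    using sum.permute[OF assms, of ?h] by simp
  finally show ?case .
qed

lemma emptying_prob_le_if_stock_le:
  assumes ab: "a \<in> {1..K}" "b \<in> {1..K}" "a \<noteq> b"
    and "0 < v a" "v a \<le> v b"
  shows "emptying_prob K v t b \<le> emptying_prob K v t a"
  using assms(4,5)
proof (induction t arbitrary: v)
  case 0
  show ?case by simp
next
  case (Suc t)
  define g where "g j i = (if v i = 1 then of_bool (t = 0 \<and> i = j)
                          else emptying_prob K (v(i := v i - 1)) t j)" for j i
  have others: "g b i \<le> g a i" if "i \<in> {1..K} - {a, b}" for i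
    using that Suc by (auto simp: g_def intro!: Suc.IH)
  have pair: "g b a + g b b \<le> g a a + g a b"
  proof (cases "v a < v b")
    case True
    then have "g b b \<le> g a b" and "g b a \<le> g a a"
      using Suc.prems ab(3) by (auto simp: g_def intro!: Suc.IH)
    then show ?thesis by simp
  next
    case False
    then have eq: "v a = v b"
      using Suc.prems by simp
    have "v(b := v b - 1) = v(a := v a - 1) \<circ> Transposition.transpose a b"
      using eq by (auto simp: fun_eq_iff Transposition.transpose_def)
    then have "emptying_prob K (v(b := v b - 1)) t x =
               emptying_prob K (v(a := v a - 1)) t (Transposition.transpose a b x)" for x
      using emptying_prob_permute[OF permutes_swap_id[OF ab(1,2)]] by simp
    then show ?thesis
      using eq ab(3) by (simp add: g_def)
  qed
  have split: "{1..K} = insert a (insert b ({1..K} - {a, b}))"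
    using ab by auto
  have "sum (g b) ({1..K} - {a, b}) \<le> sum (g a) ({1..K} - {a, b})"
    using others by (rule sum_mono)
  then have "sum (g b) {1..K} \<le> sum (g a) {1..K}"
    using pair ab(3) by (subst (1 2) split) simp
  then show ?case
    by (simp add: g_def divide_right_mono)
qed

lemma set_pmf_traj: "xs \<in> set_pmf (traj K v t) \<Longrightarrow> length xs = Suc t \<and> hd xs = v"
proof (induction t arbitrary: xs)
  case 0
  then show ?case by simp
next
  case (Suc t)
  then obtain ys w where "ys \<in> set_pmf (traj K v t)" "xs = ys @ [w]"
    by auto
  with Suc.IH[of ys] show ?case
    by (cases ys) auto
qed

lemma traj_Suc_first_step:
  "traj K v (Suc t) = bind_pmf (step K v) (\<lambda>w. map_pmf ((#) v) (traj K w t))"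
proof (induction t)
  case 0
  show ?case by (simp add: bind_return_pmf map_pmf_def)
next
  case (Suc t)
  have "traj K v (Suc (Suc t)) = bind_pmf (step K v) (\<lambda>w. bind_pmf (traj K w t)
          (\<lambda>ys. map_pmf (\<lambda>u. (v # ys) @ [u]) (step K (last (v # ys)))))"
    by (simp only: traj.simps(2)[of K v "Suc t"] Suc.IH bind_assoc_pmf bind_map_pmf)
  also have "\<dots> = bind_pmf (step K v) (\<lambda>w. bind_pmf (traj K w t)
          (\<lambda>ys. map_pmf ((#) v) (map_pmf (\<lambda>u. ys @ [u]) (step K (last ys)))))"
  proof (intro bind_pmf_cong refl)
    fix w ys
    assume "ys \<in> set_pmf (traj K w t)"
    then have "ys \<noteq> []"
      using set_pmf_traj by fastforce
    then show "map_pmf (\<lambda>u. (v # ys) @ [u]) (step K (last (v # ys))) =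
               map_pmf ((#) v) (map_pmf (\<lambda>u. ys @ [u]) (step K (last ys)))"
      by (simp add: pmf.map_comp o_def)
  qed
  also have "\<dots> = bind_pmf (step K v) (\<lambda>w. map_pmf ((#) v) (traj K w (Suc t)))"
    by (simp add: map_bind_pmf)
  finally show ?case .
qed

lemma measure_bind_pmf:
  "measure_pmf.prob (bind_pmf M f) A = (\<integral>x. measure_pmf.prob (f x) A \<partial>M)"
  unfolding measure_pmf_bind
  by (rule measure_pmf.measure_bind[where N = "count_space UNIV"])
     (auto intro: measurable_measure_pmf measure_pmf_in_subprob_algebra)

lemma prob_traj_Suc:
  assumes "2 \<le> K" and pos: "\<forall>i\<in>{1..K}. 0 < v i"
  shows "measure_pmf.prob (traj K v (Suc t)) A =
    (\<Sum>i\<in>{1..K}. measure_pmf.prob (traj K (v(i := v i - 1)) t) ((#) v -` A)) / real K"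
proof -
  have "nonzero_types K v = {1..K}"
    using pos by (auto simp: nonzero_types_def)
  then have "step K v = map_pmf (\<lambda>i. v(i := v i - 1)) (pmf_of_set {1..K})"
    using assms(1) by (simp add: step_def)
  then show ?thesis
    using assms(1)
    by (simp only: traj_Suc_first_step) (simp add: measure_bind_pmf integral_pmf_of_set)
qed

definition first_emptying_event :: "nat \<Rightarrow> (nat \<Rightarrow> nat) \<Rightarrow> nat \<Rightarrow> nat \<Rightarrow> (nat \<Rightarrow> nat) list set"
  where "first_emptying_event K v t j = {xs. tau_eq K v xs t \<and> j \<in> emptied K v xs t}"

lemma emptied_all_positive:
  "\<forall>i\<in>{1..K}. 0 < v i \<Longrightarrow> emptied K v xs s = {k \<in> {1..K}. (xs ! s) k = 0}"
  by (auto simp: emptied_def)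

lemma first_emptying_event_Cons:
  assumes "\<forall>i\<in>{1..K}. 0 < v i" "\<forall>i\<in>{1..K}. 0 < w i"
  shows "(#) v -` first_emptying_event K v (Suc t) j = first_emptying_event K w t j"
proof -
  have "emptied K v (v # ys) 0 = {}" for ys
    using assms(1) by (auto simp: emptied_def)
  moreover have "emptied K v (v # ys) (Suc s) = emptied K w ys s" for ys s
    using assms by (simp add: emptied_all_positive)
  ultimately show ?thesis
    by (auto simp: first_emptying_event_def tau_eq_def less_Suc_eq_0_disj)
qed

lemma prob_first_emptying_event_first_step_empties:
  assumes pos: "\<forall>k\<in>{1..K}. 0 < v k" and i: "i \<in> {1..K}" "v i = 1"
  shows "measure_pmf.prob (traj K (v(i := 0)) t) ((#) v -` first_emptying_event K v (Suc t) j) =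
    of_bool (t = 0 \<and> i = j)"
proof -
  have emptied_1: "emptied K v (v # ys) 1 = {i}" if "ys \<in> set_pmf (traj K (v(i := 0)) t)" for ys
  proof -
    have "ys ! 0 = v(i := 0)"
      using set_pmf_traj[OF that] by (cases ys) auto
    then show ?thesis
      unfolding emptied_all_positive[OF pos] using i pos by (auto simp: Ball_def)
  qed
  show ?thesis
  proof (cases t)
    case 0
    then show ?thesis
      using emptied_1[of "[v(i := 0)]"] pos
      by (auto simp: first_emptying_event_def tau_eq_def emptied_def indicator_def)
  next
    case Suc
    have "set_pmf (traj K (v(i := 0)) t) \<inter> (#) v -` first_emptying_event K v (Suc t) j = {}"
      using emptied_1 Suc by (fastforce simp: first_emptying_event_def tau_eq_def)
    then show ?thesis
      using Suc by (simp add: measure_pmf_zero_iff)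
  qed
qed

lemma prob_tau_p_eq_emptying_prob:
  assumes "2 \<le> K" "\<forall>i\<in>{1..K}. 0 < v i"
  shows "prob_tau_p K v t j = emptying_prob K v t j"
  unfolding prob_tau_p_def first_emptying_event_def[symmetric]
  using assms(2)
proof (induction t arbitrary: v)
  case 0
  then have "[v] \<notin> first_emptying_event K v 0 j"
    by (auto simp: first_emptying_event_def tau_eq_def emptied_def)
  then show ?case by simp
next
  case (Suc t)
  have "measure_pmf.prob (traj K (v(i := v i - 1)) t) ((#) v -` first_emptying_event K v (Suc t) j)
      = (if v i = 1 then of_bool (t = 0 \<and> i = j) else emptying_prob K (v(i := v i - 1)) t j)"
    if "i \<in> {1..K}" for i
  proof (cases "v i = 1")
    case True
    then show ?thesis
      using prob_first_emptying_event_first_step_empties[OF Suc.prems that] by simp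
  next
    case False
    define w where "w = v(i := v i - 1)"
    have "0 < v i"
      using Suc.prems that by blast
    then have pos': "\<forall>k\<in>{1..K}. 0 < w k"
      using False Suc.prems by (simp add: w_def)
    have "measure_pmf.prob (traj K w t) ((#) v -` first_emptying_event K v (Suc t) j) =
          measure_pmf.prob (traj K w t) (first_emptying_event K w t j)"
      by (simp only: first_emptying_event_Cons[OF Suc.prems pos'])
    also have "\<dots> = emptying_prob K w t j"
      by (rule Suc.IH[OF pos'])
    finally show ?thesis
      using False by (simp add: w_def)
  qed
  then show ?case
    using prob_traj_Suc[OF assms(1) Suc.prems] by simp
qed

theorem lemma12:
  fixes K :: nat and n :: "nat \<Rightarrow> nat" and t :: nat
  assumes "K > 2"
    and "0 < n 1" and "n 1 < n 2"
    and "\<forall>i\<in>{3..K}. 0 < n i"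
    and "prob_tau K n t > 0"
  shows "cond_p K n t 1 \<ge> cond_p K n t 2"
proof -
  have K: "2 \<le> K"
    using assms(1) by simp
  have pos: "\<forall>i\<in>{1..K}. 0 < n i"
  proof
    fix i
    assume "i \<in> {1..K}"
    then consider "i = 1" | "i = 2" | "i \<in> {3..K}"
      by fastforce
    then show "0 < n i"
      using assms(2-4) by cases auto
  qed
  have "emptying_prob K n t 2 \<le> emptying_prob K n t 1"
    using assms(1-3) by (intro emptying_prob_le_if_stock_le) auto
  then have "prob_tau_p K n t 2 \<le> prob_tau_p K n t 1"
    by (simp add: prob_tau_p_eq_emptying_prob[OF K pos])
  then show ?thesis
    unfolding cond_p_def using assms(5) by (simp add: divide_right_mono)
qed

end
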